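(* Let $\gamma\in\Gamma$ and let $C$, $C'$ be ordinary non-singular plane quartics defined over $k$ for which there exist $Q,Q'\in\mathcal{D}_\gamma$ and isomorphisms $\phi:C\to C_Q$, $\phi':C'\to C_{Q'}$ (defined over $\overline{k}$) with $\sigma\phi\circ\phi^{-1}=\gamma=\sigma\phi'\circ\phi'^{-1}$. Then the sets of bitangents $\mathcal{B}$ of $C$ and $\mathcal{B}'$ of $C'$ are $\mathrm{PGL}_3(k)$-equivalent, i.e. there is $\eta\in\mathrm{PGL}_3(k)$ with $\eta(\mathcal{B})=\mathcal{B}'$.
   Context: $k=\mathbb{F}_q$, $q$ a power of 2, $\overline{k}$ an algebraic closure, $\sigma(a)=a^q$ the Frobenius, acting coefficientwise on polynomials and maps. Isomorphisms between non-singular plane quartics are induced by elements of $\mathrm{PGL}_3(\overline{k})$. For $\gamma\in\mathrm{PGL}_3(\overline{k})$ with rows $\ell_1,\ell_2,\ell_3$ and homogeneous $F$, $F^\gamma=F(\ell_1,\ell_2,\ell_3)$. $\mathcal{Q}$ is the set of quadratic forms $Q=ax^2+by^2+cz^2+dxy+eyz+fzx$ over $\overline{k}$ with $abc\ne0$, $a+b+d\ne0$, $b+c+e\ne0$, $a+c+f\ne0$, $a+b+c+d+e+f\ne1$; $C_Q:Q^2=xyz(x+y+z)$. $\Gamma=\mathrm{PGL}_3(\mathbb{F}_2)$; for $\gamma\in\Gamma$ with rows $\ell_i$, $H_\gamma$ is defined by $\ell_1\ell_2\ell_3(\ell_1+\ell_2+\ell_3)=xyz(x+y+z)+H_\gamma^2$,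 $\gamma(Q)=Q^{\gamma^{-1}}+H_{\gamma^{-1}}$ (so $\gamma(C_Q)=C_{\gamma(Q)}$), and $\mathcal{D}_\gamma=\{Q\in\mathcal{Q}:\gamma(Q)=\sigma Q\}$. Ordinary means the Jacobian has 2-rank 3. *)

theory Defs
  imports "HOL-Analysis.Analysis" "HOL-Computational_Algebra.Polynomial"
begin

text \<open>Ternary forms over a field, represented by their coefficient functions:
  F i j l is the coefficient of x^i y^j z^l.\<close>
type_synonym 'a form = "nat \<Rightarrow> nat \<Rightarrow> nat \<Rightarrow> 'a"

definition homog :: "nat \<Rightarrow> 'a::zero form \<Rightarrow> bool" where
  "homog d F \<longleftrightarrow> (\<forall>i j l. F i j l \<noteq> 0 \<longrightarrow> i + j + l = d)"

definition monoms :: "nat \<Rightarrow> (nat \<times> nat \<times> nat) set" where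
  "monoms d = {(a, b, c). a \<le> d \<and> b \<le> d \<and> c \<le> d \<and> a + b + c = d}"

definition fadd :: "'a::plus form \<Rightarrow> 'a form \<Rightarrow> 'a form" where
  "fadd F G = (\<lambda>i j l. F i j l + G i j l)"

definition fscale :: "'a::times \<Rightarrow> 'a form \<Rightarrow> 'a form" where
  "fscale c F = (\<lambda>i j l. c * F i j l)"

definition fmul :: "'a::comm_semiring_1 form \<Rightarrow> 'a form \<Rightarrow> 'a form" where
  "fmul F G = (\<lambda>i j l. \<Sum>i1\<le>i. \<Sum>j1\<le>j. \<Sum>l1\<le>l.
                 F i1 j1 l1 * G (i - i1) (j - j1) (l - l1))"

definition fone :: "'a::comm_semiring_1 form" where
  "fone = (\<lambda>i j l. if i = 0 \<and> j = 0 \<and> l = 0 then 1 else 0)"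

definition fpow :: "'a::comm_semiring_1 form \<Rightarrow> nat \<Rightarrow> 'a form" where
  "fpow F n = ((fmul F) ^^ n) fone"

definition linform :: "'a::comm_semiring_1 ^ 3 \<Rightarrow> 'a form" where
  "linform w = (\<lambda>i j l. if (i, j, l) = (1, 0, 0) then w $ 1
                        else if (i, j, l) = (0, 1, 0) then w $ 2
                        else if (i, j, l) = (0, 0, 1) then w $ 3 else 0)"

definition fev :: "nat \<Rightarrow> 'a::comm_semiring_1 form \<Rightarrow> 'a ^ 3 \<Rightarrow> 'a" where
  "fev d F v = (\<Sum>(a, b, c)\<in>monoms d. F a b c * (v $ 1) ^ a * (v $ 2) ^ b * (v $ 3) ^ c)"

text \<open>F^gamma = F(l1, l2, l3), where l1, l2, l3 are the rows of the matrix M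
  (so fev (F^M) v = fev F (M *v v)); d is the degree of F.\<close>
definition fsubst :: "nat \<Rightarrow> 'a::comm_semiring_1 form \<Rightarrow> 'a ^ 3 ^ 3 \<Rightarrow> 'a form" where
  "fsubst d F M = (\<lambda>i j l. \<Sum>(a, b, c)\<in>monoms d.
      F a b c * fmul (fmul (fpow (linform (M $ 1)) a) (fpow (linform (M $ 2)) b))
                     (fpow (linform (M $ 3)) c) i j l)"

definition fdx :: "'a::comm_semiring_1 form \<Rightarrow> 'a form" where
  "fdx F = (\<lambda>i j l. of_nat (i + 1) * F (i + 1) j l)"
definition fdy :: "'a::comm_semiring_1 form \<Rightarrow> 'a form" where
  "fdy F = (\<lambda>i j l. of_nat (j + 1) * F i (j + 1) l)"
definition fdz :: "'a::comm_semiring_1 form \<Rightarrow> 'a form" where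
  "fdz F = (\<lambda>i j l. of_nat (l + 1) * F i j (l + 1))"

definition nonsingular_quartic :: "'a::comm_semiring_1 form \<Rightarrow> bool" where
  "nonsingular_quartic F \<longleftrightarrow> homog 4 F \<and> (\<exists>i j l. F i j l \<noteq> 0) \<and>
     \<not> (\<exists>v. v \<noteq> 0 \<and> fev 4 F v = 0 \<and> fev 3 (fdx F) v = 0 \<and>
              fev 3 (fdy F) v = 0 \<and> fev 3 (fdz F) v = 0)"

text \<open>Frobenius a \<mapsto> a^q and the field k = F_q inside the algebraic closure.\<close>
definition kfield :: "nat \<Rightarrow> 'a::comm_semiring_1 set" where
  "kfield q = {a. a ^ q = a}"

definition fsig :: "nat \<Rightarrow> 'a::comm_semiring_1 form \<Rightarrow> 'a form" where
  "fsig q F = (\<lambda>i j l. (F i j l) ^ q)"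

definition msig :: "nat \<Rightarrow> 'a::comm_semiring_1 ^ 3 ^ 3 \<Rightarrow> 'a ^ 3 ^ 3" where
  "msig q M = map_matrix (\<lambda>a. a ^ q) M"

definition smat :: "'a::times \<Rightarrow> 'a ^ 3 ^ 3 \<Rightarrow> 'a ^ 3 ^ 3" where
  "smat c M = (\<chi> i j. c * M $ i $ j)"

definition Xf :: "'a::comm_semiring_1 form" where "Xf = linform (vector [1, 0, 0])"
definition Yf :: "'a::comm_semiring_1 form" where "Yf = linform (vector [0, 1, 0])"
definition Zf :: "'a::comm_semiring_1 form" where "Zf = linform (vector [0, 0, 1])"

definition xyzw :: "'a::comm_semiring_1 form" where
  "xyzw = fmul (fmul (fmul Xf Yf) Zf) (fadd (fadd Xf Yf) Zf)"

text \<open>The curve C_Q : Q^2 = xyz(x+y+z), i.e. (characteristic 2) Q^2 + xyz(x+y+z) = 0.\<close>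
definition FQ :: "'a::comm_semiring_1 form \<Rightarrow> 'a form" where
  "FQ Q = fadd (fmul Q Q) xyzw"

definition Hform :: "'a::comm_semiring_1 ^ 3 ^ 3 \<Rightarrow> 'a form" where
  "Hform M = (THE H. homog 2 H \<and> fsubst 4 xyzw M = fadd xyzw (fmul H H))"

text \<open>Gamma = PGL_3(F_2) = GL_3(F_2): invertible 0/1 matrices.\<close>
definition Gamma :: "('a::comm_semiring_1 ^ 3 ^ 3) set" where
  "Gamma = {G. (\<forall>i j. G $ i $ j = 0 \<or> G $ i $ j = 1) \<and> invertible G}"

definition gact :: "'a::comm_semiring_1 ^ 3 ^ 3 \<Rightarrow> 'a form \<Rightarrow> 'a form" where
  "gact G Q = fadd (fsubst 2 Q (matrix_inv G)) (Hform (matrix_inv G))"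

definition Qset :: "'a::comm_ring_1 form set" where
  "Qset = {Q. homog 2 Q \<and>
     (let a = Q 2 0 0; b = Q 0 2 0; c = Q 0 0 2; d = Q 1 1 0; e = Q 0 1 1; f = Q 1 0 1 in
       a * b * c \<noteq> 0 \<and> a + b + d \<noteq> 0 \<and> b + c + e \<noteq> 0 \<and> a + c + f \<noteq> 0 \<and>
       a + b + c + d + e + f \<noteq> 1)}"

definition Dset :: "nat \<Rightarrow> 'a::comm_ring_1 ^ 3 ^ 3 \<Rightarrow> 'a form set" where
  "Dset q G = {Q \<in> Qset. gact G Q = fsig q Q}"

text \<open>An isomorphism C_F \<rightarrow> C_G induced by the invertible matrix M (points P \<mapsto> M P):
  F is, up to a nonzero scalar, G^M.\<close>
definition iso_by :: "'a::field form \<Rightarrow> 'a form \<Rightarrow> 'a ^ 3 ^ 3 \<Rightarrow> bool" where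
  "iso_by F G M \<longleftrightarrow> invertible M \<and> (\<exists>c. c \<noteq> 0 \<and> F = fscale c (fsubst 4 G M))"

definition lf :: "'a::comm_semiring_1 ^ 3 \<Rightarrow> 'a ^ 3 \<Rightarrow> 'a" where
  "lf w v = w $ 1 * v $ 1 + w $ 2 * v $ 2 + w $ 3 * v $ 3"

text \<open>The line {w . v = 0} is a bitangent of the quartic F = 0: the restriction of F to
  the line (parametrised by s p + t r) is a nonzero constant times the square of a
  nonzero binary quadratic form, i.e. the intersection divisor is 2D.\<close>
definition bitangent :: "'a::field form \<Rightarrow> 'a ^ 3 \<Rightarrow> bool" where
  "bitangent F w \<longleftrightarrow> (\<exists>p r. (\<forall>v. lf w v = 0 \<longleftrightarrow> (\<exists>s t. v = s *s p + t *s r)) \<and>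
      (\<exists>c g0 g1 g2. c \<noteq> 0 \<and> (g0 \<noteq> 0 \<or> g1 \<noteq> 0 \<or> g2 \<noteq> 0) \<and>
         (\<forall>s t. fev 4 F (s *s p + t *s r) = c * (g0 * s^2 + g1 * s * t + g2 * t^2)^2)))"

text \<open>The set of bitangents, each line given as its (affine cone) point set.\<close>
definition bitangents :: "'a::field form \<Rightarrow> ('a ^ 3) set set" where
  "bitangents F = {L. \<exists>w. w \<noteq> 0 \<and> L = {v. lf w v = 0} \<and> bitangent F w}"

end

theory Submission
  imports Defs
begin

text \<open>In characteristic 2 all the curves C_Q : Q^2 = xyz(x+y+z) have the same bitangents: if
  Q^2 + xyz(x+y+z) restricts to a line as c g^2, then Q'^2 + xyz(x+y+z) restricts to it as
  Q'^2 + Q^2 + c g^2 = (Q' + Q + sqrt(c) g)^2, and this square is nonzero because a non-singular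
  quartic contains no line. Hence phi and phi' identify B and B' with M^-1(B0) and M'^-1(B0) for
  one set of lines B0. The cocycle conditions give sigma(M'^-1 M) = (mu/mu') M'^-1 M, so for a
  (q-1)-st root rho of mu'/mu the matrix eta = rho M'^-1 M has entries in k, and it maps B onto B'.\<close>

section \<open>Evaluation of forms\<close>

text \<open>Forms as polynomials in 'a[z][y][x]: fmul becomes polynomial multiplication, which
  makes evaluation multiplicative.\<close>
definition poly3_coeff :: "'a::comm_ring_1 poly poly poly \<Rightarrow> 'a form" where
  "poly3_coeff P i j l = coeff (coeff (coeff P i) j) l"

definition poly3_of_form :: "nat \<Rightarrow> 'a::comm_ring_1 form \<Rightarrow> 'a poly poly poly" where
  "poly3_of_form N F = (\<Sum>i\<le>N. \<Sum>j\<le>N. \<Sum>l\<le>N. monom (monom (monom (F i j l) l) j) i)"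

definition poly3_eval :: "'a::comm_ring_1 poly poly poly \<Rightarrow> 'a ^ 3 \<Rightarrow> 'a" where
  "poly3_eval P v = poly (poly (poly P [:[:v $ 1:]:]) [:v $ 2:]) (v $ 3)"

lemma poly3_coeff_poly3_of_form:
  "poly3_coeff (poly3_of_form N F) i j l = (if i \<le> N \<and> j \<le> N \<and> l \<le> N then F i j l else 0)"
proof -
  have if_sum: "(\<Sum>x\<in>A. if P then f x else 0) = (if P then sum f A else 0)"
    for A P and f :: "nat \<Rightarrow> 'b::comm_monoid_add"
    by simp
  show ?thesis
    by (simp add: poly3_coeff_def poly3_of_form_def coeff_sum coeff_monom if_sum sum.delta)
qed

lemma poly3_eval_poly3_of_form:
  "poly3_eval (poly3_of_form N F) v =
     (\<Sum>i\<le>N. \<Sum>j\<le>N. \<Sum>l\<le>N. F i j l * (v $ 1) ^ i * (v $ 2) ^ j * (v $ 3) ^ l)"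
  by (simp add: poly3_eval_def poly3_of_form_def poly_sum poly_monom poly_power mult_ac)

lemma poly3_coeff_mult: "poly3_coeff (P * R) = fmul (poly3_coeff P) (poly3_coeff R)"
  by (simp add: fun_eq_iff poly3_coeff_def fmul_def coeff_mult coeff_sum)

lemma poly3_eqI: "poly3_coeff P = poly3_coeff R \<Longrightarrow> P = R"
  unfolding poly3_coeff_def fun_eq_iff by (intro poly_eqI) blast

lemma poly3_eval_mult: "poly3_eval (P * R) v = poly3_eval P v * poly3_eval R v"
  by (simp add: poly3_eval_def)

lemma homog_exponents_le: "homog d F \<Longrightarrow> F i j l \<noteq> 0 \<Longrightarrow> i \<le> d \<and> j \<le> d \<and> l \<le> d"
  unfolding homog_def by force

lemma poly3_coeff_poly3_of_form_homog:
  "homog d F \<Longrightarrow> d \<le> N \<Longrightarrow> poly3_coeff (poly3_of_form N F) = F"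
  by (force simp: fun_eq_iff poly3_coeff_poly3_of_form dest: homog_exponents_le)

lemma fev_eq_poly3_eval:
  assumes "homog d F" "d \<le> N"
  shows "fev d F v = poly3_eval (poly3_of_form N F) v"
proof -
  let ?t = "\<lambda>(i, j, l). F i j l * (v $ 1) ^ i * (v $ 2) ^ j * (v $ 3) ^ l"
  have "sum ?t ({..N} \<times> {..N} \<times> {..N}) = sum ?t (monoms d)"
  proof (rule sum.mono_neutral_right)
    show "monoms d \<subseteq> {..N} \<times> {..N} \<times> {..N}"
      using assms(2) unfolding monoms_def by auto
    show "\<forall>x\<in>{..N} \<times> {..N} \<times> {..N} - monoms d. ?t x = 0"
    proof
      fix x assume x: "x \<in> {..N} \<times> {..N} \<times> {..N} - monoms d"
      obtain i j l where ijl: "x = (i, j, l)" by (cases x)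
      with x have "F i j l = 0"
        using homog_exponents_le[OF assms(1)] assms(1) unfolding homog_def monoms_def by force
      then show "?t x = 0" by (simp add: ijl)
    qed
  qed auto
  then show ?thesis
    by (simp add: fev_def poly3_eval_poly3_of_form sum.cartesian_product)
qed

lemma homog_fmul:
  assumes "homog m F" "homog n G"
  shows "homog (m + n) (fmul F G)"
  unfolding homog_def
proof (intro allI impI)
  fix i j l assume "fmul F G i j l \<noteq> 0"
  then obtain i1 j1 l1 where "i1 \<le> i" "j1 \<le> j" "l1 \<le> l"
    and "F i1 j1 l1 \<noteq> 0" "G (i - i1) (j - j1) (l - l1) \<noteq> 0"
    unfolding fmul_def
    by (metis (no_types, lifting) atMost_iff mult_not_zero sum.not_neutral_contains_not_neutral)
  with assms show "i + j + l = m + n"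
    unfolding homog_def by fastforce
qed

lemma fev_fmul:
  fixes F G :: "'a::comm_ring_1 form"
  assumes F: "homog m F" and G: "homog n G"
  shows "fev (m + n) (fmul F G) v = fev m F v * fev n G v"
proof -
  let ?N = "m + n"
  have "poly3_coeff (poly3_of_form ?N (fmul F G)) = fmul F G"
    using homog_fmul[OF F G] by (rule poly3_coeff_poly3_of_form_homog) simp
  also have "\<dots> = poly3_coeff (poly3_of_form ?N F * poly3_of_form ?N G)"
    using F G by (simp add: poly3_coeff_mult poly3_coeff_poly3_of_form_homog)
  finally have "poly3_of_form ?N (fmul F G) = poly3_of_form ?N F * poly3_of_form ?N G"
    by (rule poly3_eqI)
  then show ?thesis
    using F G homog_fmul[OF F G] by (simp add: fev_eq_poly3_eval[of _ _ ?N] poly3_eval_mult)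
qed

lemma monoms_eq: "monoms d = (\<Union>a\<in>{..d}. \<Union>b\<in>{..d - a}. {(a, b, d - a - b)})"
  unfolding monoms_def by auto

lemma monoms_0: "monoms 0 = {(0, 0, 0)}"
  unfolding monoms_def by auto

lemma monoms_1: "monoms 1 = {(1, 0, 0), (0, 1, 0), (0, 0, 1)}"
  by (simp add: monoms_eq atMost_Suc insert_commute)

lemma monoms_2: "monoms 2 = {(2, 0, 0), (0, 2, 0), (0, 0, 2), (1, 1, 0), (0, 1, 1), (1, 0, 1)}"
  by (simp add: monoms_eq atMost_Suc numeral_eq_Suc) auto

lemma monoms_3:
  "monoms 3 = {(3, 0, 0), (0, 3, 0), (0, 0, 3), (2, 1, 0), (2, 0, 1), (1, 2, 0), (0, 2, 1),
     (1, 0, 2), (0, 1, 2), (1, 1, 1)}"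
  by (simp add: monoms_eq atMost_Suc numeral_eq_Suc) auto

lemma monoms_4:
  "monoms 4 = {(4, 0, 0), (0, 4, 0), (0, 0, 4), (3, 1, 0), (3, 0, 1), (1, 3, 0), (0, 3, 1),
     (1, 0, 3), (0, 1, 3), (2, 2, 0), (2, 0, 2), (0, 2, 2), (2, 1, 1), (1, 2, 1), (1, 1, 2)}"
  by (simp add: monoms_eq atMost_Suc numeral_eq_Suc) auto

lemma fev_fadd: "fev d (fadd F G) v = fev d F v + fev d G v"
  unfolding fev_def fadd_def by (simp add: split_def algebra_simps sum.distrib)

lemma fev_fscale: "fev d (fscale c F) v = c * fev d F v"
  unfolding fev_def fscale_def by (simp add: split_def algebra_simps sum_distrib_left)

lemma fev_sum_forms:
  "fev d (\<lambda>i j l. \<Sum>k\<in>S. c k * P k i j l) v = (\<Sum>k\<in>S. c k * fev d (P k) v)"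
  unfolding fev_def
  by (simp add: split_def sum_distrib_left sum_distrib_right mult_ac sum.swap[of _ S])

lemma fev_smult: "fev d F (c *s v) = c ^ d * fev d F v"
  unfolding fev_def sum_distrib_left
proof (intro sum.cong refl)
  fix x assume "x \<in> monoms d"
  then obtain a b e where x: "x = (a, b, e)" "d = a + b + e"
    unfolding monoms_def by auto
  show "(case x of (a, b, e) \<Rightarrow> F a b e * (c *s v) $ 1 ^ a * (c *s v) $ 2 ^ b * (c *s v) $ 3 ^ e) =
        c ^ d * (case x of (a, b, e) \<Rightarrow> F a b e * v $ 1 ^ a * v $ 2 ^ b * v $ 3 ^ e)"
    unfolding x by (simp add: power_mult_distrib power_add mult_ac)
qed

lemma homog_fone: "homog 0 fone"
  unfolding homog_def fone_def by auto

lemma fev_fone: "fev 0 fone v = 1"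
  unfolding fev_def fone_def monoms_0 by simp

lemma homog_linform: "homog 1 (linform w)"
  unfolding homog_def linform_def by auto

lemma fev_linform: "fev 1 (linform w) v = lf w v"
  unfolding fev_def linform_def lf_def monoms_1 by (simp add: add.assoc)

lemma homog_fev_fpow_linform:
  fixes w :: "'a::comm_ring_1 ^ 3"
  shows "homog a (fpow (linform w) a) \<and> fev a (fpow (linform w) a) v = lf w v ^ a"
proof (induction a)
  case 0
  then show ?case by (simp add: fpow_def homog_fone fev_fone)
next
  case (Suc a)
  have "fpow (linform w) (Suc a) = fmul (linform w) (fpow (linform w) a)"
    by (simp add: fpow_def)
  with Suc show ?case
    using homog_fmul[OF homog_linform Suc[THEN conjunct1]]
      fev_fmul[OF homog_linform Suc[THEN conjunct1]]
    by (simp add: fev_linform[unfolded One_nat_def])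
qed

lemma lf_row: "lf (M $ i) v = (M *v v) $ i"
  by (simp add: lf_def matrix_vector_mult_def sum_3)

lemma fev_fsubst:
  fixes F :: "'a::comm_ring_1 form"
  shows "fev d (fsubst d F M) v = fev d F (M *v v)"
proof -
  define P where "P = (\<lambda>(a, b, c). fmul (fmul (fpow (linform (M $ 1)) a) (fpow (linform (M $ 2)) b))
    (fpow (linform (M $ 3)) c))"
  have "fev d (fsubst d F M) v = (\<Sum>(a, b, c)\<in>monoms d. F a b c * fev d (P (a, b, c)) v)"
    using fev_sum_forms[where c = "\<lambda>(a, b, c). F a b c" and P = P and S = "monoms d"]
    by (simp add: fsubst_def P_def split_def)
  also have "\<dots> = (\<Sum>(a, b, c)\<in>monoms d. F a b c * (M *v v) $ 1 ^ a * (M *v v) $ 2 ^ b * (M *v v) $ 3 ^ c)"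
  proof (intro sum.cong refl)
    fix x assume "x \<in> monoms d"
    then obtain a b c where x: "x = (a, b, c)" "d = a + b + c"
      unfolding monoms_def by auto
    have "fev (a + b + c) (P (a, b, c)) v = lf (M $ 1) v ^ a * lf (M $ 2) v ^ b * lf (M $ 3) v ^ c"
      using homog_fev_fpow_linform[of a "M $ 1" v] homog_fev_fpow_linform[of b "M $ 2" v]
        homog_fev_fpow_linform[of c "M $ 3" v]
      by (simp add: P_def fev_fmul homog_fmul)
    then show "(case x of (a, b, c) \<Rightarrow> F a b c * fev d (P (a, b, c)) v) =
        (case x of (a, b, c) \<Rightarrow> F a b c * (M *v v) $ 1 ^ a * (M *v v) $ 2 ^ b * (M *v v) $ 3 ^ c)"
      using x by (simp add: lf_row mult_ac)
  qed
  finally show ?thesis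
    unfolding fev_def .
qed

section \<open>Non-singular quartics contain no line\<close>

definition line_poly :: "nat \<Rightarrow> 'a::comm_ring_1 form \<Rightarrow> 'a ^ 3 \<Rightarrow> 'a ^ 3 \<Rightarrow> 'a poly" where
  "line_poly d F v u = (\<Sum>(a, b, c)\<in>monoms d.
     smult (F a b c) ([:v $ 1, u $ 1:] ^ a * [:v $ 2, u $ 2:] ^ b * [:v $ 3, u $ 3:] ^ c))"

lemma poly_line_poly: "poly (line_poly d F v u) t = fev d F (v + t *s u)"
  unfolding line_poly_def fev_def by (simp add: poly_sum split_def mult_ac)

lemma coeff_pCons_power_1: "coeff ([:x :: 'a::comm_ring_1, y:] ^ a) 1 = of_nat a * x ^ (a - 1) * y"
proof (induction a)
  case 0
  then show ?case by simp
next
  case (Suc a)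
  have "coeff ([:x, y:] ^ Suc a) 1 = x * coeff ([:x, y:] ^ a) 1 + y * coeff ([:x, y:] ^ a) 0"
    by (simp add: coeff_pCons split: nat.split)
  also have "\<dots> = of_nat (Suc a) * x ^ a * y"
    using Suc by (cases a) (auto simp: coeff_0_power algebra_simps)
  finally show ?case by simp
qed

lemma coeff_mult_1: "coeff (p * q) 1 = coeff p 0 * coeff q 1 + coeff p 1 * coeff q 0"
  by (simp add: coeff_mult atMost_Suc add.commute)

lemma coeff_product_1:
  "coeff ([:x1, y1:] ^ a * [:x2, y2:] ^ b * [:x3 :: 'a::comm_ring_1, y3:] ^ c) 1 =
     of_nat a * x1 ^ (a - 1) * y1 * x2 ^ b * x3 ^ c + x1 ^ a * of_nat b * x2 ^ (b - 1) * y2 * x3 ^ c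
     + x1 ^ a * x2 ^ b * of_nat c * x3 ^ (c - 1) * y3"
  by (simp only: coeff_mult_1 coeff_mult_0 coeff_0_power coeff_pCons_power_1 coeff_pCons_0)
    (simp add: algebra_simps)

definition polar :: "'a::comm_ring_1 form \<Rightarrow> 'a ^ 3 \<Rightarrow> 'a ^ 3 \<Rightarrow> 'a" where
  "polar F v u = u $ 1 * fev 3 (fdx F) v + u $ 2 * fev 3 (fdy F) v + u $ 3 * fev 3 (fdz F) v"

lemma coeff_line_poly_1: "coeff (line_poly 4 F v u) 1 = polar F v u"
proof -
  have "coeff (line_poly 4 F v u) 1 = (\<Sum>(a, b, c)\<in>monoms 4. F a b c *
     (of_nat a * v $ 1 ^ (a - 1) * u $ 1 * v $ 2 ^ b * v $ 3 ^ c
      + v $ 1 ^ a * of_nat b * v $ 2 ^ (b - 1) * u $ 2 * v $ 3 ^ c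
      + v $ 1 ^ a * v $ 2 ^ b * of_nat c * v $ 3 ^ (c - 1) * u $ 3))"
    unfolding line_poly_def coeff_sum
    by (intro sum.cong refl) (simp add: split_def coeff_product_1[unfolded One_nat_def])
  also have "\<dots> = polar F v u"
    unfolding polar_def fev_def fdx_def fdy_def fdz_def monoms_4 monoms_3
    by (simp add: algebra_simps eval_nat_numeral)
  finally show ?thesis .
qed

lemma infinite_UNIV_alg_closed: "infinite (UNIV :: 'a::alg_closed_field set)"
proof
  assume fin: "finite (UNIV :: 'a set)"
  let ?P = "(\<Prod>a\<in>(UNIV :: 'a set). [:- a, 1:])"
  have "degree ?P = card (UNIV :: 'a set)"
    by (subst degree_prod_sum_eq) auto
  moreover have "card (UNIV :: 'a set) > 0"
    using fin by (simp add: card_gt_0_iff)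
  ultimately have "degree (?P + 1) > 0"
    by (subst degree_add_eq_left) auto
  then obtain x where "poly (?P + 1) x = 0"
    using alg_closed_imp_poly_has_root by blast
  moreover have "poly ?P x = 0"
    using fin by (simp add: poly_prod prod_zero_iff)
  ultimately show False by simp
qed

lemma poly_zero_if_roots_off_0:
  fixes P :: "'a::alg_closed_field poly"
  assumes "\<And>t. t \<noteq> 0 \<Longrightarrow> poly P t = 0"
  shows "P = 0"
proof (rule ccontr)
  assume "P \<noteq> 0"
  then have "finite (insert 0 {t. poly P t = 0})"
    by (simp add: poly_roots_finite)
  moreover have "insert 0 {t. poly P t = 0} = UNIV"
    using assms by auto
  ultimately have "finite (UNIV :: 'a set)"
    by simp
  with infinite_UNIV_alg_closed show False ..
qed

lemma form_has_zero_in_plane: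
  fixes F :: "'a::alg_closed_field form"
  assumes "d > 0" and indep: "\<forall>a b. a *s p + b *s r = 0 \<longrightarrow> a = 0 \<and> b = 0"
  shows "\<exists>x. x \<noteq> 0 \<and> (\<exists>a b. x = a *s p + b *s r) \<and> fev d F x = 0"
proof (cases "degree (line_poly d F p r) > 0")
  case True
  then obtain s where "poly (line_poly d F p r) s = 0"
    using alg_closed_imp_poly_has_root by blast
  then have "fev d F (1 *s p + s *s r) = 0"
    by (simp add: poly_line_poly)
  moreover have "1 *s p + s *s r \<noteq> 0"
    using indep[rule_format, of 1 s] by auto
  ultimately show ?thesis
    by blast
next
  case False
  then have "degree (line_poly d F p r) = 0"
    by simp
  then obtain c where "line_poly d F p r = [:c:]"
    by (rule degree_eq_zeroE)
  then have const: "fev d F (p + s *s r) = c" for s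
    using poly_line_poly[of d F p r s] by simp
  \<comment> \<open>F is constant on p + s r, so by homogeneity F (r + t p) = t^d c for t \<noteq> 0.\<close>
  have "poly (line_poly d F r p - monom c d) t = 0" if "t \<noteq> 0" for t
  proof -
    have "r + t *s p = t *s (p + inverse t *s r)"
      using that by (simp add: vec_eq_iff algebra_simps)
    then have "poly (line_poly d F r p) t = t ^ d * fev d F (p + inverse t *s r)"
      by (simp only: poly_line_poly fev_smult)
    then show ?thesis
      by (simp add: const poly_monom)
  qed
  then have "line_poly d F r p - monom c d = 0"
    by (intro poly_zero_if_roots_off_0)
  then have "line_poly d F r p = monom c d"
    by simp
  then have "fev d F r = 0"
    using poly_line_poly[of d F r p 0] \<open>d > 0\<close> by (simp add: poly_monom power_0_left)
  moreover have "r = 0 *s p + 1 *s r" and "r \<noteq> 0"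
    using indep[rule_format, of 0 1] by auto
  ultimately show ?thesis by blast
qed

lemma lf_add: "lf w (x + y) = lf w x + lf w y"
  by (simp add: lf_def algebra_simps)

lemma lf_diff: "lf w (x - y) = lf w x - lf w y" for w :: "'a::comm_ring_1 ^ 3"
  by (simp add: lf_def algebra_simps)

lemma lf_smult: "lf w (c *s x) = c * lf w x"
  by (simp add: lf_def algebra_simps)

lemma plane_basis_exists:
  fixes w :: "'a::field ^ 3"
  assumes "w \<noteq> 0"
  shows "\<exists>p r u. lf w p = 0 \<and> lf w r = 0 \<and> (\<forall>a b. a *s p + b *s r = 0 \<longrightarrow> a = 0 \<and> b = 0) \<and>
    lf w u \<noteq> 0"
proof -
  have indep: "\<forall>a b. a *s p + b *s r = 0 \<longrightarrow> a = 0 \<and> b = 0"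
    if "p $ i = 0" "r $ i \<noteq> 0" "p $ j \<noteq> 0" "r $ j = 0" for p r :: "'a ^ 3" and i j
  proof (intro allI impI)
    fix a b assume "a *s p + b *s r = 0"
    then have "(a *s p + b *s r) $ i = 0" "(a *s p + b *s r) $ j = 0"
      by simp_all
    with that show "a = 0 \<and> b = 0" by simp
  qed
  consider "w $ 1 \<noteq> 0" | "w $ 2 \<noteq> 0" | "w $ 3 \<noteq> 0"
    using assms by (simp add: vec_eq_iff forall_3) blast
  then show ?thesis
  proof cases
    case 1
    let ?p = "vector [w $ 2, - w $ 1, 0] :: 'a ^ 3" and ?r = "vector [w $ 3, 0, - w $ 1] :: 'a ^ 3"
    have "lf w ?p = 0" "lf w ?r = 0" "lf w (vector [1, 0, 0]) \<noteq> 0"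
      using 1 by (simp_all add: lf_def algebra_simps)
    moreover have "\<forall>a b. a *s ?p + b *s ?r = 0 \<longrightarrow> a = 0 \<and> b = 0"
      by (rule indep[of _ 3 _ 2]) (use 1 in simp_all)
    ultimately show ?thesis by blast
  next
    case 2
    let ?p = "vector [- w $ 2, w $ 1, 0] :: 'a ^ 3" and ?r = "vector [0, w $ 3, - w $ 2] :: 'a ^ 3"
    have "lf w ?p = 0" "lf w ?r = 0" "lf w (vector [0, 1, 0]) \<noteq> 0"
      using 2 by (simp_all add: lf_def algebra_simps)
    moreover have "\<forall>a b. a *s ?p + b *s ?r = 0 \<longrightarrow> a = 0 \<and> b = 0"
      by (rule indep[of _ 3 _ 1]) (use 2 in simp_all)
    ultimately show ?thesis by blast
  next
    case 3
    let ?p = "vector [- w $ 3, 0, w $ 1] :: 'a ^ 3" and ?r = "vector [0, - w $ 3, w $ 2] :: 'a ^ 3"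
    have "lf w ?p = 0" "lf w ?r = 0" "lf w (vector [0, 0, 1]) \<noteq> 0"
      using 3 by (simp_all add: lf_def algebra_simps)
    moreover have "\<forall>a b. a *s ?p + b *s ?r = 0 \<longrightarrow> a = 0 \<and> b = 0"
      by (rule indep[of _ 2 _ 1]) (use 3 in simp_all)
    ultimately show ?thesis by blast
  qed
qed

lemma polar_eq_0_if_line_in_curve:
  fixes F :: "'a::alg_closed_field form"
  assumes "\<And>v. lf w v = 0 \<Longrightarrow> fev 4 F v = 0" and "lf w v = 0" and "lf w e = 0"
  shows "polar F v e = 0"
proof -
  have "line_poly 4 F v e = 0"
    by (rule poly_zero_if_roots_off_0) (simp add: poly_line_poly assms lf_add lf_smult)
  then show ?thesis
    using coeff_line_poly_1[of F v e] by simp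
qed

definition contains_no_line :: "('a::comm_ring_1 ^ 3 \<Rightarrow> 'a) \<Rightarrow> bool" where
  "contains_no_line f \<longleftrightarrow> (\<forall>w. w \<noteq> 0 \<longrightarrow> (\<exists>v. lf w v = 0 \<and> f v \<noteq> 0))"

lemma nonsingular_quartic_contains_no_line:
  fixes F :: "'a::alg_closed_field form"
  assumes "nonsingular_quartic F"
  shows "contains_no_line (fev 4 F)"
  unfolding contains_no_line_def
proof (intro allI impI, rule ccontr)
  fix w :: "'a ^ 3"
  assume "w \<noteq> 0" and "\<not> (\<exists>v. lf w v = 0 \<and> fev 4 F v \<noteq> 0)"
  then have vanish: "fev 4 F v = 0" if "lf w v = 0" for v
    using that by blast
  obtain p r u where pr: "lf w p = 0" "lf w r = 0" "\<forall>a b. a *s p + b *s r = 0 \<longrightarrow> a = 0 \<and> b = 0"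
    and u: "lf w u \<noteq> 0"
    using plane_basis_exists[OF \<open>w \<noteq> 0\<close>] by blast
  \<comment> \<open>The polar in the transversal direction u is a cubic, so it vanishes at some v on the
    line; there all partial derivatives vanish.\<close>
  define G where
    "G = fadd (fadd (fscale (u $ 1) (fdx F)) (fscale (u $ 2) (fdy F))) (fscale (u $ 3) (fdz F))"
  have G: "fev 3 G x = polar F x u" for x
    by (simp add: G_def fev_fadd fev_fscale polar_def)
  obtain v where v: "v \<noteq> 0" "\<exists>a b. v = a *s p + b *s r" "fev 3 G v = 0"
    using form_has_zero_in_plane[of 3 p r G] pr(3) by auto
  have "lf w v = 0"
    using v(2) pr by (auto simp: lf_add lf_smult)
  have polar_v: "polar F v e = 0" for e
  proof -
    define \<alpha> where "\<alpha> = lf w e / lf w u"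
    have "lf w (e - \<alpha> *s u) = 0"
      using u by (simp add: lf_diff lf_smult \<alpha>_def)
    moreover have "polar F v e = polar F v (e - \<alpha> *s u) + \<alpha> * polar F v u"
      by (simp add: polar_def algebra_simps)
    ultimately show ?thesis
      using polar_eq_0_if_line_in_curve[OF vanish \<open>lf w v = 0\<close>] v(3) G by simp
  qed
  have "fev 3 (fdx F) v = 0" "fev 3 (fdy F) v = 0" "fev 3 (fdz F) v = 0"
    using polar_v[of "vector [1, 0, 0]"] polar_v[of "vector [0, 1, 0]"] polar_v[of "vector [0, 0, 1]"]
    by (simp_all add: polar_def)
  with assms v(1) vanish[OF \<open>lf w v = 0\<close>] show False
    unfolding nonsingular_quartic_def by blast
qed

section \<open>Bitangents under linear changes of coordinates\<close>

lemma
  fixes A :: "'a::semiring_1 ^ 'n ^ 'n"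
  assumes "invertible A"
  shows matrix_inv_right: "A ** matrix_inv A = mat 1"
    and matrix_inv_left: "matrix_inv A ** A = mat 1"
  using someI_ex[OF assms[unfolded invertible_def]] unfolding matrix_inv_def by auto

lemma invertible_matrix_inv: "invertible A \<Longrightarrow> invertible (matrix_inv A)"
  for A :: "'a::semiring_1 ^ 'n ^ 'n"
  using matrix_inv_left matrix_inv_right invertible_def by blast

lemma matrix_inv_unique_left:
  fixes A X :: "'a::semiring_1 ^ 'n ^ 'n"
  assumes "invertible A" and "X ** A = mat 1"
  shows "X = matrix_inv A"
proof -
  have "X = X ** (A ** matrix_inv A)"
    by (simp add: matrix_inv_right[OF assms(1)])
  also have "\<dots> = matrix_inv A"
    by (simp add: matrix_mul_assoc assms(2))
  finally show ?thesis .
qed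

lemma matrix_vector_mul_cancel: "A ** B = mat 1 \<Longrightarrow> A *v (B *v x) = x"
  by (simp add: matrix_vector_mul_assoc)

lemma matrix_vector_mult_span2:
  fixes B :: "'a::field ^ 3 ^ 3"
  shows "B *v (s *s p + t *s r) = s *s (B *v p) + t *s (B *v r)"
  by (simp add: matrix_vector_right_distrib vector_scalar_commute)

lemma lf_matrix_vector_mult: "lf w (A *v u) = lf (w v* A) u"
  for A :: "'a::comm_ring_1 ^ 3 ^ 3"
  by (simp add: lf_def matrix_vector_mult_def vector_matrix_mult_def sum_3 algebra_simps)

lemma vector_matrix_mult_nonzero:
  fixes A B :: "'a::comm_ring_1 ^ 3 ^ 3"
  assumes "A ** B = mat 1" and "w \<noteq> 0"
  shows "w v* A \<noteq> 0"
proof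
  assume "w v* A = 0"
  have "w = (w v* A) v* B"
    using assms(1) by (simp add: vector_matrix_mul_assoc)
  also have "\<dots> = 0"
    using \<open>w v* A = 0\<close> by (simp add: vector_matrix_mult_def vec_eq_iff)
  finally show False
    using assms(2) by simp
qed

definition square_on_plane :: "('a::field ^ 3 \<Rightarrow> 'a) \<Rightarrow> 'a ^ 3 \<Rightarrow> 'a ^ 3 \<Rightarrow> bool" where
  "square_on_plane f p r \<longleftrightarrow> (\<exists>c g0 g1 g2. c \<noteq> 0 \<and> (g0 \<noteq> 0 \<or> g1 \<noteq> 0 \<or> g2 \<noteq> 0) \<and>
     (\<forall>s t. f (s *s p + t *s r) = c * (g0 * s\<^sup>2 + g1 * s * t + g2 * t\<^sup>2)\<^sup>2))"

text \<open>Bitangency only depends on the polynomial function of the quartic, so it is stated for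
  functions on the affine cone, on which changes of coordinates act by composition.\<close>
definition bitangent_lines :: "('a::field ^ 3 \<Rightarrow> 'a) \<Rightarrow> ('a ^ 3) set set" where
  "bitangent_lines f = {L. \<exists>w. w \<noteq> 0 \<and> L = {v. lf w v = 0} \<and>
     (\<exists>p r. (\<forall>v. lf w v = 0 \<longleftrightarrow> (\<exists>s t. v = s *s p + t *s r)) \<and> square_on_plane f p r)}"

lemma bitangents_eq_bitangent_lines: "bitangents F = bitangent_lines (fev 4 F)"
  unfolding bitangents_def bitangent_def bitangent_lines_def square_on_plane_def by blast

lemma image_line_matrix:
  fixes A B :: "'a::comm_ring_1 ^ 3 ^ 3"
  assumes AB: "A ** B = mat 1" and BA: "B ** A = mat 1"
  shows "(\<lambda>v. B *v v) ` {v. lf w v = 0} = {u. lf (w v* A) u = 0}"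
proof safe
  fix v assume "lf w v = 0"
  then show "lf (w v* A) (B *v v) = 0"
    by (simp flip: lf_matrix_vector_mult add: matrix_vector_mul_cancel[OF AB])
next
  fix u assume "lf (w v* A) u = 0"
  then have "A *v u \<in> {v. lf w v = 0}"
    by (simp add: lf_matrix_vector_mult)
  moreover have "u = B *v (A *v u)"
    by (simp add: matrix_vector_mul_cancel[OF BA])
  ultimately show "u \<in> (\<lambda>v. B *v v) ` {v. lf w v = 0}"
    by blast
qed

lemma line_span_transfer:
  fixes A B :: "'a::field ^ 3 ^ 3"
  assumes AB: "A ** B = mat 1" and BA: "B ** A = mat 1"
    and span: "\<forall>v. lf w v = 0 \<longleftrightarrow> (\<exists>s t. v = s *s p + t *s r)"
  shows "\<forall>u. lf (w v* A) u = 0 \<longleftrightarrow> (\<exists>s t. u = s *s (B *v p) + t *s (B *v r))"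
proof
  fix u
  have "lf (w v* A) u = 0 \<longleftrightarrow> (\<exists>s t. A *v u = s *s p + t *s r)"
    using span by (simp flip: lf_matrix_vector_mult)
  also have "\<dots> \<longleftrightarrow> (\<exists>s t. u = s *s (B *v p) + t *s (B *v r))"
    by (metis matrix_vector_mul_cancel[OF AB] matrix_vector_mul_cancel[OF BA] matrix_vector_mult_span2)
  finally show "lf (w v* A) u = 0 \<longleftrightarrow> (\<exists>s t. u = s *s (B *v p) + t *s (B *v r))" .
qed

lemma square_on_plane_transfer:
  fixes A B :: "'a::field ^ 3 ^ 3"
  assumes fh: "\<forall>u. f u = c * h (A *v u)" and "c \<noteq> 0" and AB: "A ** B = mat 1"
    and "square_on_plane h p r"
  shows "square_on_plane f (B *v p) (B *v r)"
proof -
  obtain c0 g0 g1 g2 where "c0 \<noteq> 0" "g0 \<noteq> 0 \<or> g1 \<noteq> 0 \<or> g2 \<noteq> 0"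
    and h: "\<forall>s t. h (s *s p + t *s r) = c0 * (g0 * s\<^sup>2 + g1 * s * t + g2 * t\<^sup>2)\<^sup>2"
    using assms(4) unfolding square_on_plane_def by blast
  moreover have "f (s *s (B *v p) + t *s (B *v r)) = (c * c0) * (g0 * s\<^sup>2 + g1 * s * t + g2 * t\<^sup>2)\<^sup>2"
    for s t
    using h by (simp add: fh matrix_vector_mult_span2 vector_scalar_commute matrix_vector_mul_cancel[OF AB]
        flip: matrix_vector_mult_span2)
  ultimately show ?thesis
    unfolding square_on_plane_def using \<open>c \<noteq> 0\<close> by (metis mult_eq_0_iff)
qed

lemma bitangent_lines_transfer:
  fixes A B :: "'a::field ^ 3 ^ 3"
  assumes fh: "\<forall>u. f u = c * h (A *v u)" and "c \<noteq> 0"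
    and AB: "A ** B = mat 1" and BA: "B ** A = mat 1" and "L \<in> bitangent_lines h"
  shows "(\<lambda>v. B *v v) ` L \<in> bitangent_lines f"
proof -
  obtain w p r where "w \<noteq> 0" and L: "L = {v. lf w v = 0}"
    and span: "\<forall>v. lf w v = 0 \<longleftrightarrow> (\<exists>s t. v = s *s p + t *s r)" and "square_on_plane h p r"
    using assms(5) unfolding bitangent_lines_def by blast
  have "w v* A \<noteq> 0"
    using vector_matrix_mult_nonzero[OF AB \<open>w \<noteq> 0\<close>] .
  moreover have "(\<lambda>v. B *v v) ` L = {u. lf (w v* A) u = 0}"
    unfolding L by (rule image_line_matrix[OF AB BA])
  moreover note line_span_transfer[OF AB BA span]
  moreover have "square_on_plane f (B *v p) (B *v r)"
    using square_on_plane_transfer[OF fh \<open>c \<noteq> 0\<close> AB] \<open>square_on_plane h p r\<close> .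
  ultimately show ?thesis
    unfolding bitangent_lines_def by blast
qed

lemma bitangent_lines_linear_change:
  fixes A :: "'a::field ^ 3 ^ 3"
  assumes fh: "\<forall>u. f u = c * h (A *v u)" and "c \<noteq> 0" and "invertible A"
  shows "bitangent_lines f = (\<lambda>L. (\<lambda>v. matrix_inv A *v v) ` L) ` bitangent_lines h"
proof
  note AB = matrix_inv_right[OF \<open>invertible A\<close>] and BA = matrix_inv_left[OF \<open>invertible A\<close>]
  show "(\<lambda>L. (\<lambda>v. matrix_inv A *v v) ` L) ` bitangent_lines h \<subseteq> bitangent_lines f"
    using bitangent_lines_transfer[OF fh \<open>c \<noteq> 0\<close> AB BA] by blast
  show "bitangent_lines f \<subseteq> (\<lambda>L. (\<lambda>v. matrix_inv A *v v) ` L) ` bitangent_lines h"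
  proof
    fix L assume "L \<in> bitangent_lines f"
    have hf: "\<forall>u. h u = inverse c * f (matrix_inv A *v u)"
      using \<open>c \<noteq> 0\<close> by (simp add: fh matrix_vector_mul_cancel[OF AB])
    have "(\<lambda>v. A *v v) ` L \<in> bitangent_lines h"
      using \<open>c \<noteq> 0\<close> by (intro bitangent_lines_transfer[OF hf _ BA AB \<open>L \<in> bitangent_lines f\<close>]) simp
    moreover have "L = (\<lambda>v. matrix_inv A *v v) ` (\<lambda>v. A *v v) ` L"
      by (simp add: image_image matrix_vector_mul_cancel[OF BA])
    ultimately show "L \<in> (\<lambda>L. (\<lambda>v. matrix_inv A *v v) ` L) ` bitangent_lines h"
      by blast
  qed
qed

lemma contains_no_line_linear_change:
  fixes A :: "'a::field ^ 3 ^ 3"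
  assumes fh: "\<forall>u. f u = c * h (A *v u)" and "invertible A" and "contains_no_line f"
  shows "contains_no_line h"
  unfolding contains_no_line_def
proof (intro allI impI)
  fix w :: "'a ^ 3" assume "w \<noteq> 0"
  then have "w v* A \<noteq> 0"
    using vector_matrix_mult_nonzero[OF matrix_inv_right[OF \<open>invertible A\<close>]] by blast
  then obtain v where "lf (w v* A) v = 0" "f v \<noteq> 0"
    using \<open>contains_no_line f\<close> unfolding contains_no_line_def by blast
  then have "lf w (A *v v) = 0 \<and> h (A *v v) \<noteq> 0"
    by (simp add: lf_matrix_vector_mult fh)
  then show "\<exists>v. lf w v = 0 \<and> h v \<noteq> 0" ..
qed

lemma fev_iso_by:
  assumes "iso_by F G M"
  obtains c where "c \<noteq> 0" and "\<forall>u. fev 4 F u = c * fev 4 G (M *v u)"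
  using assms unfolding iso_by_def by (auto simp: fev_fscale fev_fsubst)

lemma bitangents_iso_by:
  fixes F G :: "'a::field form"
  assumes "iso_by F G M"
  shows "bitangents F = (\<lambda>L. (\<lambda>v. matrix_inv M *v v) ` L) ` bitangent_lines (fev 4 G)"
proof -
  obtain c where "c \<noteq> 0" "\<forall>u. fev 4 F u = c * fev 4 G (M *v u)"
    using assms by (rule fev_iso_by)
  moreover have "invertible M"
    using assms unfolding iso_by_def by blast
  ultimately show ?thesis
    unfolding bitangents_eq_bitangent_lines by (intro bitangent_lines_linear_change)
qed

lemma contains_no_line_iso_by:
  fixes F G :: "'a::alg_closed_field form"
  assumes "iso_by F G M" and "nonsingular_quartic F"
  shows "contains_no_line (fev 4 G)"
proof -
  obtain c where "\<forall>u. fev 4 F u = c * fev 4 G (M *v u)"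
    using assms(1) by (rule fev_iso_by)
  moreover have "invertible M"
    using assms(1) unfolding iso_by_def by blast
  ultimately show ?thesis
    using nonsingular_quartic_contains_no_line[OF assms(2)] by (rule contains_no_line_linear_change)
qed

section \<open>The bitangents of the curves C_Q\<close>

lemma char2_minus: "(2::'a::comm_ring_1) = 0 \<Longrightarrow> - x = (x::'a)"
  by (metis add_eq_0_iff mult_2 mult_zero_left)

lemma char2_square_add:
  fixes a b :: "'a::comm_ring_1"
  assumes "(2::'a) = 0"
  shows "(a + b)\<^sup>2 = a\<^sup>2 + b\<^sup>2"
proof -
  have "(a + b)\<^sup>2 = a\<^sup>2 + b\<^sup>2 + 2 * (a * b)"
    by (simp add: power2_eq_square algebra_simps)
  with assms show ?thesis
    by simp
qed

lemma fev_FQ: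
  fixes Q :: "'a::comm_ring_1 form"
  assumes "homog 2 Q"
  shows "fev 4 (FQ Q) v = (fev 2 Q v)\<^sup>2 + fev 4 xyzw v"
  using fev_fmul[OF assms assms, of v] by (simp add: FQ_def fev_fadd power2_eq_square)

lemma fev_quadratic_on_plane:
  fixes Q :: "'a::comm_ring_1 form"
  shows "fev 2 Q (s *s p + t *s r) =
    fev 2 Q p * s\<^sup>2 + (fev 2 Q (p + r) - fev 2 Q p - fev 2 Q r) * s * t + fev 2 Q r * t\<^sup>2"
  unfolding fev_def monoms_2 by (simp add: algebra_simps power2_eq_square)

lemma square_on_plane_FQ:
  fixes Q Q' :: "'a::alg_closed_field form"
  assumes char2: "(2::'a) = 0" and "homog 2 Q" and "homog 2 Q'"
    and square: "square_on_plane (fev 4 (FQ Q)) p r"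
    and nonzero: "\<exists>s t. fev 4 (FQ Q') (s *s p + t *s r) \<noteq> 0"
  shows "square_on_plane (fev 4 (FQ Q')) p r"
proof -
  obtain c g0 g1 g2 where "c \<noteq> 0"
    and g: "\<forall>s t. fev 4 (FQ Q) (s *s p + t *s r) = c * (g0 * s\<^sup>2 + g1 * s * t + g2 * t\<^sup>2)\<^sup>2"
    using square unfolding square_on_plane_def by blast
  obtain d where "d\<^sup>2 = c"
    using nth_root_exists[of 2 c] by auto
  define h0 where "h0 = fev 2 Q' p + fev 2 Q p + d * g0"
  define h1 where "h1 = (fev 2 Q' (p + r) - fev 2 Q' p - fev 2 Q' r) +
    (fev 2 Q (p + r) - fev 2 Q p - fev 2 Q r) + d * g1"
  define h2 where "h2 = fev 2 Q' r + fev 2 Q r + d * g2"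
  have h: "fev 4 (FQ Q') (s *s p + t *s r) = 1 * (h0 * s\<^sup>2 + h1 * s * t + h2 * t\<^sup>2)\<^sup>2" for s t
  proof -
    let ?x = "s *s p + t *s r" and ?g = "g0 * s\<^sup>2 + g1 * s * t + g2 * t\<^sup>2"
    have "fev 4 xyzw ?x = c * ?g\<^sup>2 - (fev 2 Q ?x)\<^sup>2"
      using g fev_FQ[OF \<open>homog 2 Q\<close>, of ?x] by simp
    then have "fev 4 (FQ Q') ?x = (fev 2 Q' ?x)\<^sup>2 + (fev 2 Q ?x)\<^sup>2 + (d * ?g)\<^sup>2"
      using fev_FQ[OF \<open>homog 2 Q'\<close>, of ?x] \<open>d\<^sup>2 = c\<close> char2_minus[OF char2]
      by (simp add: power_mult_distrib)
    also have "\<dots> = (fev 2 Q' ?x + fev 2 Q ?x + d * ?g)\<^sup>2"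
      by (simp add: char2_square_add[OF char2])
    also have "fev 2 Q' ?x + fev 2 Q ?x + d * ?g = h0 * s\<^sup>2 + h1 * s * t + h2 * t\<^sup>2"
      unfolding h0_def h1_def h2_def fev_quadratic_on_plane[of Q'] fev_quadratic_on_plane[of Q]
      by (simp add: algebra_simps)
    finally show ?thesis
      by simp
  qed
  moreover have "h0 \<noteq> 0 \<or> h1 \<noteq> 0 \<or> h2 \<noteq> 0"
    using nonzero h by auto
  ultimately show ?thesis
    unfolding square_on_plane_def by (metis one_neq_zero)
qed

lemma bitangent_lines_FQ_subset:
  fixes Q Q' :: "'a::alg_closed_field form"
  assumes char2: "(2::'a) = 0" and "homog 2 Q" and "homog 2 Q'"
    and no_line: "contains_no_line (fev 4 (FQ Q'))"
  shows "bitangent_lines (fev 4 (FQ Q)) \<subseteq> bitangent_lines (fev 4 (FQ Q'))"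
proof
  fix L assume "L \<in> bitangent_lines (fev 4 (FQ Q))"
  then obtain w p r where line: "w \<noteq> 0" "L = {v. lf w v = 0}"
    and span: "\<forall>v. lf w v = 0 \<longleftrightarrow> (\<exists>s t. v = s *s p + t *s r)"
    and square: "square_on_plane (fev 4 (FQ Q)) p r"
    unfolding bitangent_lines_def by blast
  obtain v where v: "lf w v = 0" "fev 4 (FQ Q') v \<noteq> 0"
    using no_line \<open>w \<noteq> 0\<close> unfolding contains_no_line_def by blast
  obtain s t where "v = s *s p + t *s r"
    using span v(1) by blast
  with v(2) have "square_on_plane (fev 4 (FQ Q')) p r"
    using square_on_plane_FQ[OF char2 \<open>homog 2 Q\<close> \<open>homog 2 Q'\<close> square] by blast
  with line span show "L \<in> bitangent_lines (fev 4 (FQ Q'))"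
    unfolding bitangent_lines_def by blast
qed

lemma bitangent_lines_FQ_eq:
  fixes Q Q' :: "'a::alg_closed_field form"
  assumes "(2::'a) = 0" and "homog 2 Q" and "homog 2 Q'"
    and "contains_no_line (fev 4 (FQ Q))" and "contains_no_line (fev 4 (FQ Q'))"
  shows "bitangent_lines (fev 4 (FQ Q)) = bitangent_lines (fev 4 (FQ Q'))"
  using bitangent_lines_FQ_subset assms by (metis subset_antisym)

section \<open>Frobenius descent of the transition matrix\<close>

lemma char2_power_two_power_add:
  fixes a b :: "'a::comm_ring_1"
  assumes "(2::'a) = 0"
  shows "(a + b) ^ 2 ^ n = a ^ 2 ^ n + b ^ 2 ^ n"
proof (induction n)
  case 0
  then show ?case by simp
next
  case (Suc n)
  have "(a + b) ^ 2 ^ Suc n = ((a + b) ^ 2 ^ n)\<^sup>2"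
    by (simp add: power_mult[symmetric] mult.commute)
  also have "\<dots> = (a ^ 2 ^ n)\<^sup>2 + (b ^ 2 ^ n)\<^sup>2"
    by (simp add: Suc char2_square_add[OF assms])
  also have "\<dots> = a ^ 2 ^ Suc n + b ^ 2 ^ Suc n"
    by (simp add: power_mult[symmetric] mult.commute)
  finally show ?case .
qed

lemma msig_mult:
  fixes X Y :: "'a::comm_ring_1 ^ 3 ^ 3"
  assumes "(2::'a) = 0"
  shows "msig (2 ^ n) (X ** Y) = msig (2 ^ n) X ** msig (2 ^ n) Y"
  by (simp add: vec_eq_iff msig_def matrix_matrix_mult_def sum_3
      char2_power_two_power_add[OF assms] power_mult_distrib)

lemma msig_mat_1: "q > 0 \<Longrightarrow> msig q (mat 1 :: 'a::comm_ring_1 ^ 3 ^ 3) = mat 1"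
  by (simp add: vec_eq_iff msig_def mat_def power_0_left)

lemma msig_smat: "msig q (smat c X) = smat (c ^ q) (msig q X)"
  by (simp add: vec_eq_iff msig_def smat_def power_mult_distrib)

lemma smat_mult_left: "smat c X ** Y = smat c (X ** Y)" for X Y :: "'a::comm_ring_1 ^ 3 ^ 3"
  by (simp add: vec_eq_iff smat_def matrix_matrix_mult_def sum_distrib_left mult_ac)

lemma smat_mult_right: "X ** smat c Y = smat c (X ** Y)" for X Y :: "'a::comm_ring_1 ^ 3 ^ 3"
  by (simp add: vec_eq_iff smat_def matrix_matrix_mult_def sum_distrib_left mult_ac)

lemma smat_smat: "smat a (smat b X) = smat (a * b) X" for X :: "'a::comm_ring_1 ^ 3 ^ 3"
  by (simp add: vec_eq_iff smat_def mult_ac)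

lemma smat_1: "smat 1 X = X" for X :: "'a::comm_ring_1 ^ 3 ^ 3"
  by (simp add: vec_eq_iff smat_def)

lemma smat_matrix_vector_mult: "smat c X *v v = c *s (X *v v)" for X :: "'a::comm_ring_1 ^ 3 ^ 3"
  by (simp add: vec_eq_iff smat_def matrix_vector_mult_def sum_distrib_left mult_ac)

lemma invertible_smat:
  fixes X :: "'a::field ^ 3 ^ 3"
  assumes "c \<noteq> 0" and "invertible X"
  shows "invertible (smat c X)"
proof -
  obtain Y where "X ** Y = mat 1" "Y ** X = mat 1"
    using assms(2) unfolding invertible_def by blast
  then have "smat c X ** smat (inverse c) Y = mat 1" "smat (inverse c) Y ** smat c X = mat 1"
    using assms(1) by (simp_all add: smat_mult_left smat_mult_right smat_smat smat_1)
  then show ?thesis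
    unfolding invertible_def by blast
qed

lemma msig_transition:
  fixes M M' G :: "'a::field ^ 3 ^ 3"
  assumes char2: "(2::'a) = 0" and "invertible M" and "invertible M'" and "\<mu>' \<noteq> 0"
    and cocycle: "msig (2 ^ n) M ** matrix_inv M = smat \<mu> G"
    and cocycle': "msig (2 ^ n) M' ** matrix_inv M' = smat \<mu>' G"
  shows "msig (2 ^ n) (matrix_inv M' ** M) = smat (\<mu> / \<mu>') (matrix_inv M' ** M)"
proof -
  let ?s = "msig (2 ^ n)"
  have frob: "?s X = smat \<nu> (G ** X)" if "invertible X" "?s X ** matrix_inv X = smat \<nu> G" for X \<nu>
  proof -
    have "?s X = ?s X ** matrix_inv X ** X"
      using matrix_inv_left[OF \<open>invertible X\<close>] by (simp flip: matrix_mul_assoc)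
    then show ?thesis
      by (simp add: that(2) smat_mult_left)
  qed
  have "?s (matrix_inv M') ** ?s M' = mat 1"
    by (simp add: matrix_inv_left[OF \<open>invertible M'\<close>] msig_mat_1 flip: msig_mult[OF char2])
  then have "smat \<mu>' (?s (matrix_inv M') ** G) ** M' = mat 1"
    by (simp add: frob[OF \<open>invertible M'\<close> cocycle'] smat_mult_left smat_mult_right matrix_mul_assoc)
  then have "smat \<mu>' (?s (matrix_inv M') ** G) = matrix_inv M'"
    by (rule matrix_inv_unique_left[OF \<open>invertible M'\<close>])
  then have "smat (inverse \<mu>') (smat \<mu>' (?s (matrix_inv M') ** G)) = smat (inverse \<mu>') (matrix_inv M')"
    by simp
  then have inv': "?s (matrix_inv M') ** G = smat (inverse \<mu>') (matrix_inv M')"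
    using \<open>\<mu>' \<noteq> 0\<close> by (simp add: smat_smat smat_1)
  have "?s (matrix_inv M' ** M) = smat \<mu> (?s (matrix_inv M') ** G ** M)"
    by (simp add: msig_mult[OF char2] frob[OF \<open>invertible M\<close> cocycle] smat_mult_right matrix_mul_assoc)
  then show ?thesis
    by (simp add: inv' smat_mult_left smat_smat divide_inverse mult.commute)
qed

lemma msig_fixed_rescaling:
  fixes N :: "'a::alg_closed_field ^ 3 ^ 3"
  assumes "q > 1" and "c \<noteq> 0" and "msig q N = smat c N"
  shows "\<exists>\<rho>. \<rho> \<noteq> 0 \<and> msig q (smat \<rho> N) = smat \<rho> N"
proof -
  obtain \<rho> where \<rho>: "\<rho> ^ (q - 1) = inverse c"
    using nth_root_exists[of "q - 1" "inverse c"] \<open>q > 1\<close> by auto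
  have "\<rho> \<noteq> 0"
  proof
    assume "\<rho> = 0"
    with \<rho> \<open>q > 1\<close> have "inverse c = 0"
      by (simp add: power_0_left)
    with \<open>c \<noteq> 0\<close> show False
      by simp
  qed
  have "\<rho> ^ q = \<rho> * \<rho> ^ (q - 1)"
    using \<open>q > 1\<close> by (cases q) simp_all
  with \<rho> \<open>c \<noteq> 0\<close> have "\<rho> ^ q * c = \<rho>"
    by simp
  then have "msig q (smat \<rho> N) = smat \<rho> N"
    by (simp add: msig_smat assms(3) smat_smat)
  with \<open>\<rho> \<noteq> 0\<close> show ?thesis
    by blast
qed

lemma msig_fixed_in_kfield:
  assumes "msig q X = X"
  shows "X $ i $ j \<in> kfield q"
proof -
  have "msig q X $ i $ j = X $ i $ j"
    using assms by simp
  then show ?thesis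
    by (simp add: msig_def kfield_def)
qed

lemma frobenius_fixed_transition:
  fixes M M' G :: "'a::alg_closed_field ^ 3 ^ 3"
  assumes "(2::'a) = 0" and "n \<ge> 1" and "invertible M" and "invertible M'"
    and "\<exists>\<mu>. \<mu> \<noteq> 0 \<and> msig (2 ^ n) M ** matrix_inv M = smat \<mu> G"
    and "\<exists>\<mu>. \<mu> \<noteq> 0 \<and> msig (2 ^ n) M' ** matrix_inv M' = smat \<mu> G"
  obtains \<rho> where "\<rho> \<noteq> 0"
    and "msig (2 ^ n) (smat \<rho> (matrix_inv M' ** M)) = smat \<rho> (matrix_inv M' ** M)"
proof -
  obtain \<mu> \<mu>' where "\<mu> \<noteq> 0" "\<mu>' \<noteq> 0"
    and "msig (2 ^ n) M ** matrix_inv M = smat \<mu> G" "msig (2 ^ n) M' ** matrix_inv M' = smat \<mu>' G"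
    using assms(5,6) by blast
  then have "msig (2 ^ n) (matrix_inv M' ** M) = smat (\<mu> / \<mu>') (matrix_inv M' ** M)"
    using msig_transition[OF assms(1,3,4)] by blast
  moreover have "(2::nat) ^ n > 1"
    using assms(2) by (intro one_less_power) auto
  ultimately show ?thesis
    using msig_fixed_rescaling \<open>\<mu> \<noteq> 0\<close> \<open>\<mu>' \<noteq> 0\<close> that by (metis divide_eq_0_iff)
qed

lemma image_smult_line:
  fixes \<rho> :: "'a::field"
  assumes "\<rho> \<noteq> 0"
  shows "(\<lambda>v. \<rho> *s v) ` {v. lf w v = 0} = {v. lf w v = 0}"
proof safe
  fix v assume "lf w v = 0"
  then show "lf w (\<rho> *s v) = 0"
    by (simp add: lf_smult)
  have "v = \<rho> *s (inverse \<rho> *s v)" and "lf w (inverse \<rho> *s v) = 0"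
    using assms \<open>lf w v = 0\<close> by (simp_all add: lf_smult)
  then show "v \<in> (\<lambda>v. \<rho> *s v) ` {v. lf w v = 0}"
    by blast
qed

lemma image_bitangent_lines_transition:
  fixes M M' :: "'a::field ^ 3 ^ 3"
  assumes "\<rho> \<noteq> 0" and "invertible M"
  shows "(\<lambda>L. (\<lambda>v. smat \<rho> (matrix_inv M' ** M) *v v) ` L) `
      (\<lambda>L. (\<lambda>v. matrix_inv M *v v) ` L) ` bitangent_lines f =
    (\<lambda>L. (\<lambda>v. matrix_inv M' *v v) ` L) ` bitangent_lines f"
proof -
  have "smat \<rho> (matrix_inv M' ** M) *v (matrix_inv M *v v) =
      \<rho> *s (matrix_inv M' *v (M *v (matrix_inv M *v v)))" for v
    unfolding smat_matrix_vector_mult by (simp only: matrix_vector_mul_assoc matrix_mul_assoc)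
  also have "\<rho> *s (matrix_inv M' *v (M *v (matrix_inv M *v v))) = matrix_inv M' *v (\<rho> *s v)" for v
    by (simp add: matrix_vector_mul_cancel[OF matrix_inv_right[OF \<open>invertible M\<close>]] vector_scalar_commute)
  finally have transition: "smat \<rho> (matrix_inv M' ** M) *v (matrix_inv M *v v) = matrix_inv M' *v (\<rho> *s v)"
    for v .
  have "(\<lambda>v. smat \<rho> (matrix_inv M' ** M) *v v) ` (\<lambda>v. matrix_inv M *v v) ` L =
      (\<lambda>v. matrix_inv M' *v v) ` L" if "L \<in> bitangent_lines f" for L
  proof -
    obtain w where L: "L = {v. lf w v = 0}"
      using \<open>L \<in> bitangent_lines f\<close> unfolding bitangent_lines_def by blast
    have "(\<lambda>v. smat \<rho> (matrix_inv M' ** M) *v v) ` (\<lambda>v. matrix_inv M *v v) ` L =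
        (\<lambda>v. matrix_inv M' *v v) ` (\<lambda>v. \<rho> *s v) ` L"
      by (simp add: image_image transition)
    also have "(\<lambda>v. \<rho> *s v) ` L = L"
      unfolding L by (rule image_smult_line[OF \<open>\<rho> \<noteq> 0\<close>])
    finally show ?thesis .
  qed
  then show ?thesis
    by (simp add: image_image cong: image_cong)
qed

theorem lemma1p4:
  fixes n :: nat
    and G M M' :: "'K::alg_closed_field ^ 3 ^ 3"
    and F F' Q Q' :: "'K form"
  assumes char2: "(2::'K) = 0"
    and algebraic: "\<forall>a::'K. \<exists>m>0. a ^ (2 ^ m) = a"
    and n_pos: "n \<ge> 1"
    and G_Gamma: "G \<in> Gamma"
    and F_quartic: "nonsingular_quartic F" and F_k: "\<forall>i j l. F i j l \<in> kfield (2 ^ n)"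
    and F'_quartic: "nonsingular_quartic F'" and F'_k: "\<forall>i j l. F' i j l \<in> kfield (2 ^ n)"
    and Q_D: "Q \<in> Dset (2 ^ n) G" and Q'_D: "Q' \<in> Dset (2 ^ n) G"
    and phi: "iso_by F (FQ Q) M" and phi': "iso_by F' (FQ Q') M'"
    and cocycle: "\<exists>\<mu>. \<mu> \<noteq> 0 \<and> msig (2 ^ n) M ** matrix_inv M = smat \<mu> G"
    and cocycle': "\<exists>\<mu>. \<mu> \<noteq> 0 \<and> msig (2 ^ n) M' ** matrix_inv M' = smat \<mu> G"
  shows "\<exists>\<eta>::'K ^ 3 ^ 3. invertible \<eta> \<and> (\<forall>i j. \<eta> $ i $ j \<in> kfield (2 ^ n)) \<and>
           (\<lambda>L. (\<lambda>v. \<eta> *v v) ` L) ` bitangents F = bitangents F'"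
proof -
  have "homog 2 Q" "homog 2 Q'"
    using Q_D Q'_D unfolding Dset_def Qset_def by auto
  then have same: "bitangent_lines (fev 4 (FQ Q)) = bitangent_lines (fev 4 (FQ Q'))"
    using bitangent_lines_FQ_eq[OF char2] contains_no_line_iso_by phi phi' F_quartic F'_quartic
    by blast
  have "invertible M" "invertible M'"
    using phi phi' unfolding iso_by_def by blast+
  then obtain \<rho> where "\<rho> \<noteq> 0"
    and fixed: "msig (2 ^ n) (smat \<rho> (matrix_inv M' ** M)) = smat \<rho> (matrix_inv M' ** M)"
    using frobenius_fixed_transition[OF char2 n_pos _ _ cocycle cocycle'] by blast
  show ?thesis
  proof (intro exI conjI allI)
    show "invertible (smat \<rho> (matrix_inv M' ** M))"
      by (intro invertible_smat invertible_mult invertible_matrix_inv \<open>\<rho> \<noteq> 0\<close> \<open>invertible M\<close>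
          \<open>invertible M'\<close>)
    show "smat \<rho> (matrix_inv M' ** M) $ i $ j \<in> kfield (2 ^ n)" for i j
      using fixed by (rule msig_fixed_in_kfield)
    show "(\<lambda>L. (\<lambda>v. smat \<rho> (matrix_inv M' ** M) *v v) ` L) ` bitangents F = bitangents F'"
      unfolding bitangents_iso_by[OF phi] bitangents_iso_by[OF phi'] same
      by (rule image_bitangent_lines_transition[OF \<open>\<rho> \<noteq> 0\<close> \<open>invertible M\<close>])
  qed
qed

end
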